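(* Let $D$ be a Dyck path of semilength $n$ with row-area sequence $(r_0,r_1,\dots,r_n)$ and column-area sequence $(c_1,\dots,c_{n+1})$, and let $\mathcal F=\{k\in\{1,\dots,n\}: r_{k+1+c_{k+1}}=r_{k-1}+c_{k+1}+2\}$. Let $\pi$ be the permutation associated with $D$ by the Billey–Jockusch–Stanley bijection. Then $k\in\mathcal F$ if and only if $\pi(k)=k$.
   Context: Work in an $n\times n$ array of unit cells; the cell $(i,j)$ is the one in column $i$ (columns numbered $1,\dots,n$ from left to right) and row $j$ (rows numbered $1,\dots,n$ from bottom to top), i.e. the square $[i-1,i]\times[j-1,j]$. A Dyck path of semilength $n$ is a lattice path from $(0,0)$ to $(n,n)$ with unit north and east steps that never goes below the line $y=x$. Row-area sequence: $r_0=-1$ and, for $1\le k\le n$, $r_k$ is the number of full cells in row $k$ strictly between the $k$-th north step of $D$ and the diagonal; equivalently, if the $k$-th north step lies on the vertical line $x=x_k$, then $r_k=k-1-x_k$. Column-area sequence: for $1\le k\le n$, $c_k$ is the number of full cells in column $k$ strictly between the $k$-th east step and the diagonal; equivalently, if the $k$-th east step lies at height $y_k$, then $c_k=y_k-k$; and $c_{n+1}=-1$ (so $1\le k+1+c_{k+1}\le n$ for all $1\le k\le n$). A valley of $D$ is an east step immediately followed by a north step; if the east step is the $k$-th east step and the north step is the $\ell$-th north step, the valley is at position $(k,\ell)$, the cell enclosed by these two steps. Billey–Jockusch–Stanley bijection: put a cross in every valley cell of $D$; then, for the columns $i=1,2,\dots,n$ in this order, if column $i$ does not yet contain a cross, put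 a cross in the lowest cell of column $i$ whose row does not yet contain a cross. The crosses form a permutation matrix, and $\pi(i)$ is the row of the cross in column $i$. *)

theory Defs
  imports Main
begin

text \<open>A lattice path of semilength n is encoded as a list of steps:
  True = north step (0,1), False = east step (1,0).\<close>

definition nN :: "bool list \<Rightarrow> nat \<Rightarrow> nat" where
  "nN w i = length (filter id (take i w))"

definition nE :: "bool list \<Rightarrow> nat \<Rightarrow> nat" where
  "nE w i = length (filter Not (take i w))"

definition dyck_path :: "nat \<Rightarrow> bool list \<Rightarrow> bool" where
  "dyck_path n w \<longleftrightarrow> length w = 2 * n \<and> nN w (length w) = n \<and>
     (\<forall>i \<le> length w. nE w i \<le> nN w i)"

definition north_positions :: "bool list \<Rightarrow> nat list" where
  "north_positions w = filter (\<lambda>p. w ! p) [0..<length w]"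

definition east_positions :: "bool list \<Rightarrow> nat list" where
  "east_positions w = filter (\<lambda>p. \<not> w ! p) [0..<length w]"

text \<open>x_k: the vertical line on which the k-th north step lies (k \<ge> 1).\<close>
definition xk :: "bool list \<Rightarrow> nat \<Rightarrow> nat" where
  "xk w k = nE w (north_positions w ! (k - 1))"

text \<open>y_k: the height of the k-th east step (k \<ge> 1).\<close>
definition yk :: "bool list \<Rightarrow> nat \<Rightarrow> nat" where
  "yk w k = nN w (east_positions w ! (k - 1))"

definition row_area :: "bool list \<Rightarrow> nat \<Rightarrow> int" where
  "row_area w k = (if k = 0 then -1 else int k - 1 - int (xk w k))"

definition col_area :: "nat \<Rightarrow> bool list \<Rightarrow> nat \<Rightarrow> int" where
  "col_area n w k = (if k = n + 1 then -1 else int (yk w k) - int k)"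

text \<open>Valley cells: (column k, row l) where the k-th east step is immediately
  followed by the l-th north step.\<close>
definition valleys :: "bool list \<Rightarrow> (nat \<times> nat) set" where
  "valleys w = {(nE w p + 1, nN w (Suc p) + 1) | p. Suc p < length w \<and> \<not> w ! p \<and> w ! Suc p}"

fun bjs_crosses :: "nat \<Rightarrow> bool list \<Rightarrow> nat \<Rightarrow> (nat \<times> nat) set" where
  "bjs_crosses n w 0 = valleys w"
| "bjs_crosses n w (Suc i) =
     (let C = bjs_crosses n w i in
      if (\<exists>j. (Suc i, j) \<in> C) then C
      else insert (Suc i, LEAST j. 1 \<le> j \<and> j \<le> n \<and> (\<forall>c. (c, j) \<notin> C)) C)"

definition bjs_perm :: "nat \<Rightarrow> bool list \<Rightarrow> nat \<Rightarrow> nat" where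
  "bjs_perm n w i = (THE j. (i, j) \<in> bjs_crosses n w n)"

definition fixset :: "nat \<Rightarrow> bool list \<Rightarrow> nat set" where
  "fixset n w = {k \<in> {1..n}.
     row_area w (nat (int k + 1 + col_area n w (k + 1)))
       = row_area w (k - 1) + col_area n w (k + 1) + 2}"

end

theory Submission
  imports Defs
begin

text \<open>The Billey--Jockusch--Stanley fill puts its cross of column k into row k exactly when
  column k has no valley and k is the lowest free row once columns 1, ..., k - 1 are filled.
  The valley cells lie strictly above the diagonal and the greedy crosses on or below it, so a
  counting argument shows that this happens iff no valley cell (c, r) has c \<le> k \<le> r.
  On the path side, the valleys are the cells (x_r, r) at which x increases, and
  k + 1 + c_{k+1} is the last row r with x_r \<le> k; so the equation defining F says that x does
  not increase between row k - 1 and that row, which is the same condition.\<close>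

lemma Least_eq_iff:
  fixes k :: "'a :: wellorder"
  assumes "P j"
  shows "(LEAST j. P j) = k \<longleftrightarrow> P k \<and> (\<forall>j<k. \<not> P j)"
  using assms by (metis LeastI Least_equality not_less not_less_Least)

lemma mono_on_eq_iff_no_ascent:
  fixes f :: "nat \<Rightarrow> 'a::linorder"
  assumes "mono_on {a..b} f" "a \<le> b"
  shows "f a = f b \<longleftrightarrow> \<not> (\<exists>r. a < r \<and> r \<le> b \<and> f (r - 1) < f r)"
proof
  assume "f a = f b"
  show "\<not> (\<exists>r. a < r \<and> r \<le> b \<and> f (r - 1) < f r)"
  proof
    assume "\<exists>r. a < r \<and> r \<le> b \<and> f (r - 1) < f r"
    then obtain r where r: "a < r" "r \<le> b" "f (r - 1) < f r"
      by blast
    have "f a \<le> f (r - 1)" "f r \<le> f b"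
      using r by (auto intro!: mono_onD[OF assms(1)])
    then show False
      using r(3) \<open>f a = f b\<close> by (metis leD le_less_trans)
  qed
next
  assume no_ascent: "\<not> (\<exists>r. a < r \<and> r \<le> b \<and> f (r - 1) < f r)"
  have "c \<le> b \<Longrightarrow> f a = f c" if "a \<le> c" for c
    using that
  proof (induction c rule: dec_induct)
    case (step c)
    then have "f c \<le> f (Suc c)"
      using assms(1) by (auto intro: mono_onD)
    moreover have "\<not> f c < f (Suc c)"
      using no_ascent step by fastforce
    ultimately show ?case
      using step by simp
  qed simp
  then show "f a = f b"
    using assms(2) by simp
qed

lemma filter_upt_nth_length_filter:
  assumes "q < L" "P q"
  shows "filter P [0..<L] ! length (filter P [0..<q]) = q"
    and "length (filter P [0..<q]) < length (filter P [0..<L])"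
proof -
  have "[0..<L] = [0..<q] @ q # [Suc q..<L]"
    using assms(1) by (metis upt_add_eq_append upt_conv_Cons le_add1 le_add_diff_inverse
        less_imp_le_nat add_0)
  then have "filter P [0..<L] = filter P [0..<q] @ q # filter P [Suc q..<L]"
    using assms(2) by simp
  then show "filter P [0..<L] ! length (filter P [0..<q]) = q"
    and "length (filter P [0..<q]) < length (filter P [0..<L])"
    by (simp_all add: nth_append)
qed

lemma length_filter_upt_nth:
  assumes "i < length (filter P [0..<L])"
  shows "filter P [0..<L] ! i < L" "P (filter P [0..<L] ! i)"
    and "length (filter P [0..<filter P [0..<L] ! i]) = i"
proof -
  let ?q = "filter P [0..<L] ! i"
  have "?q \<in> set (filter P [0..<L])"
    using assms by (rule nth_mem)
  then show "?q < L" "P ?q"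
    by auto
  then show "length (filter P [0..<?q]) = i"
    using filter_upt_nth_length_filter[of ?q L P] assms
    by (metis distinct_filter distinct_upt nth_eq_iff_index_eq)
qed

lemma nN_Suc: "p < length w \<Longrightarrow> nN w (Suc p) = nN w p + (if w ! p then 1 else 0)"
  unfolding nN_def by (simp add: take_Suc_conv_app_nth)

lemma nE_Suc: "p < length w \<Longrightarrow> nE w (Suc p) = nE w p + (if w ! p then 0 else 1)"
  unfolding nE_def by (simp add: take_Suc_conv_app_nth)

lemma nN_add_nE: "p \<le> length w \<Longrightarrow> nN w p + nE w p = p"
  unfolding nN_def nE_def using sum_length_filter_compl[of id "take p w"] by simp

lemma nN_mono: "p \<le> q \<Longrightarrow> nN w p \<le> nN w q"
  unfolding nN_def by (metis le_add_diff_inverse take_add length_filter_le filter_append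
      length_append le_add1)

lemma nE_mono: "p \<le> q \<Longrightarrow> nE w p \<le> nE w q"
  unfolding nE_def by (metis le_add_diff_inverse take_add length_filter_le filter_append
      length_append le_add1)

lemma take_eq_map_nth: "q \<le> length w \<Longrightarrow> take q w = map ((!) w) [0..<q]"
  by (simp add: list_eq_iff_nth_eq)

lemma nN_eq_length_filter_upt: "q \<le> length w \<Longrightarrow> nN w q = length (filter ((!) w) [0..<q])"
  unfolding nN_def by (simp add: take_eq_map_nth filter_map comp_def)

lemma nE_eq_length_filter_upt:
  "q \<le> length w \<Longrightarrow> nE w q = length (filter (\<lambda>p. \<not> w ! p) [0..<q])"
  unfolding nE_def by (simp add: take_eq_map_nth filter_map comp_def)

fun bjs_fill :: "nat \<Rightarrow> (nat \<times> nat) set \<Rightarrow> nat \<Rightarrow> (nat \<times> nat) set" where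
  "bjs_fill n V 0 = V"
| "bjs_fill n V (Suc i) =
     (let C = bjs_fill n V i in
      if (\<exists>j. (Suc i, j) \<in> C) then C
      else insert (Suc i, LEAST j. 1 \<le> j \<and> j \<le> n \<and> (\<forall>c. (c, j) \<notin> C)) C)"

lemma bjs_crosses_eq_bjs_fill: "bjs_crosses n w i = bjs_fill n (valleys w) i"
  by (induction i) (simp_all add: Let_def)

lemma bjs_fill_mono: "k \<le> i \<Longrightarrow> bjs_fill n V k \<subseteq> bjs_fill n V i"
  by (induction i rule: dec_induct) (auto simp: Let_def)

lemma bjs_fill_column_stable: "k \<le> i \<Longrightarrow> (k, j) \<in> bjs_fill n V i \<Longrightarrow> (k, j) \<in> bjs_fill n V k"
  by (induction i rule: dec_induct) (auto simp: Let_def split: if_splits)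

locale upper_partial_perm =
  fixes n :: nat and V :: "(nat \<times> nat) set"
  assumes cell_bounds: "(c, r) \<in> V \<Longrightarrow> 1 \<le> c \<and> c < r \<and> r \<le> n"
    and inj_fst: "inj_on fst V"
    and inj_snd: "inj_on snd V"
begin

lemma finite_V: "finite V"
  by (rule finite_subset[of _ "{1..n} \<times> {1..n}"]) (auto dest: cell_bounds)

definition fill_inv :: "nat \<Rightarrow> (nat \<times> nat) set \<Rightarrow> bool" where
  "fill_inv i C \<longleftrightarrow> V \<subseteq> C \<and> finite C \<and> inj_on fst C \<and> inj_on snd C \<and>
     (\<forall>c j. (c, j) \<in> C - V \<longrightarrow> 1 \<le> j \<and> j \<le> c \<and> c \<le> i) \<and> {1..i} \<subseteq> Domain C"

lemma fill_inv_cell: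
  assumes "fill_inv i C" "(c, j) \<in> C"
  shows "1 \<le> c" "1 \<le> j" "j \<le> Suc i \<Longrightarrow> c \<le> i" "(c, j) \<notin> V \<Longrightarrow> j \<le> c \<and> c \<le> i"
proof -
  have "(c, j) \<notin> V \<Longrightarrow> 1 \<le> j \<and> j \<le> c \<and> c \<le> i"
    using assms unfolding fill_inv_def by blast
  moreover have "(c, j) \<in> V \<Longrightarrow> 1 \<le> c \<and> c < j"
    using cell_bounds by blast
  ultimately show "1 \<le> c" "1 \<le> j" "j \<le> Suc i \<Longrightarrow> c \<le> i" "(c, j) \<notin> V \<Longrightarrow> j \<le> c \<and> c \<le> i"
    by (cases "(c, j) \<in> V"; simp)+
qed

lemma card_fill_cols:
  assumes "fill_inv i C"
  shows "card {p \<in> C. fst p \<le> i} = i"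
proof -
  let ?T = "{p \<in> C. fst p \<le> i}"
  have "fst ` ?T = Domain C \<inter> {..i}"
    unfolding Domain_fst by auto
  also have "\<dots> = {1..i}"
    using assms fill_inv_cell(1)[OF assms] unfolding fill_inv_def by auto
  finally have "fst ` ?T = {1..i}" .
  moreover have "inj_on fst ?T"
    using assms unfolding fill_inv_def by (blast intro: inj_on_subset)
  ultimately show ?thesis
    using card_image[of fst ?T] by simp
qed

lemma fill_low_rows_in_cols:
  assumes "fill_inv i C"
  shows "{p \<in> C. snd p \<le> Suc i} \<subseteq> {p \<in> C. fst p \<le> i}"
  using fill_inv_cell(3)[OF assms] by auto

lemma card_fill_rows:
  assumes "fill_inv i C"
  shows "card (Range {p \<in> C. snd p \<le> m}) = card {p \<in> C. snd p \<le> m}"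
proof -
  have "inj_on snd {p \<in> C. snd p \<le> m}"
    using assms unfolding fill_inv_def by (blast intro: inj_on_subset)
  then show ?thesis
    unfolding Range_snd by (rule card_image)
qed

lemma fill_free_row:
  assumes "fill_inv i C"
  shows "\<exists>j. 1 \<le> j \<and> j \<le> Suc i \<and> j \<notin> Range C"
proof (rule ccontr)
  let ?S = "{p \<in> C. snd p \<le> Suc i}"
  assume "\<not> ?thesis"
  then have "{1..Suc i} \<subseteq> Range ?S"
    by (auto simp: Range_iff)
  moreover have "finite ?S"
    using assms unfolding fill_inv_def by simp
  ultimately have "Suc i \<le> card (Range ?S)"
    using card_mono[OF finite_Range, of ?S "{1..Suc i}"] by simp
  also have "\<dots> = card ?S"
    by (rule card_fill_rows[OF assms])
  also have "\<dots> \<le> card {p \<in> C. fst p \<le> i}"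
    using card_mono[OF _ fill_low_rows_in_cols[OF assms]] assms unfolding fill_inv_def by simp
  also have "\<dots> = i"
    by (rule card_fill_cols[OF assms])
  finally show False
    by simp
qed

text \<open>The crosses in rows \<open>\<le> i\<close> lie in columns \<open>\<le> i\<close>, which hold exactly i crosses; so rows
  1, ..., i are all occupied iff no cross of a column \<open>\<le> i\<close> lies above row i.\<close>
lemma fill_rows_occupied_iff:
  assumes "fill_inv i C"
  shows "{1..i} \<subseteq> Range C \<longleftrightarrow> (\<forall>c r. (c, r) \<in> V \<longrightarrow> c \<le> i \<longrightarrow> r \<le> i)"
proof -
  define S where "S = {p \<in> C. snd p \<le> i}"
  define T where "T = {p \<in> C. fst p \<le> i}"
  have "V \<subseteq> C" "finite C"
    using assms unfolding fill_inv_def by simp_all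
  then have "finite T"
    unfolding T_def by simp
  have "S \<subseteq> T"
    using fill_low_rows_in_cols[OF assms] unfolding S_def T_def by auto
  have "Range S \<subseteq> {1..i}"
    using fill_inv_cell(2)[OF assms] unfolding S_def by auto
  have "Range S = Range C \<inter> {..i}"
    unfolding S_def by (auto simp: Range_iff)
  then have "{1..i} \<subseteq> Range C \<longleftrightarrow> Range S = {1..i}"
    using \<open>Range S \<subseteq> {1..i}\<close> by auto
  also have "\<dots> \<longleftrightarrow> card (Range S) = card {1..i}"
    using card_subset_eq[OF finite_atLeastAtMost \<open>Range S \<subseteq> {1..i}\<close>] by metis
  also have "\<dots> \<longleftrightarrow> card S = card T"
    using card_fill_rows[OF assms, of i] card_fill_cols[OF assms] unfolding S_def T_def by simp
  also have "\<dots> \<longleftrightarrow> T \<subseteq> S"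
    using card_subset_eq[OF \<open>finite T\<close> \<open>S \<subseteq> T\<close>] \<open>S \<subseteq> T\<close> by (metis subset_antisym)
  also have "\<dots> \<longleftrightarrow> (\<forall>c j. (c, j) \<in> C \<longrightarrow> c \<le> i \<longrightarrow> j \<le> i)"
    unfolding S_def T_def by auto
  also have "\<dots> \<longleftrightarrow> (\<forall>c r. (c, r) \<in> V \<longrightarrow> c \<le> i \<longrightarrow> r \<le> i)"
  proof
    assume "\<forall>c j. (c, j) \<in> C \<longrightarrow> c \<le> i \<longrightarrow> j \<le> i"
    then show "\<forall>c r. (c, r) \<in> V \<longrightarrow> c \<le> i \<longrightarrow> r \<le> i"
      using \<open>V \<subseteq> C\<close> by blast
  next
    assume valleys_low: "\<forall>c r. (c, r) \<in> V \<longrightarrow> c \<le> i \<longrightarrow> r \<le> i"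
    show "\<forall>c j. (c, j) \<in> C \<longrightarrow> c \<le> i \<longrightarrow> j \<le> i"
    proof (intro allI impI)
      fix c j assume cj: "(c, j) \<in> C" "c \<le> i"
      show "j \<le> i"
      proof (cases "(c, j) \<in> V")
        case True
        then show ?thesis
          using valleys_low cj(2) by blast
      next
        case False
        then show ?thesis
          using fill_inv_cell(4)[OF assms cj(1)] by simp
      qed
    qed
  qed
  finally show ?thesis .
qed

lemma fill_inv_0: "fill_inv 0 V"
  unfolding fill_inv_def using finite_V inj_fst inj_snd by simp

lemma fill_inv_keep:
  assumes "fill_inv i C" "(Suc i, j) \<in> C"
  shows "fill_inv (Suc i) C"
proof -
  have "{1..i} \<subseteq> Domain C" "\<forall>c j. (c, j) \<in> C - V \<longrightarrow> 1 \<le> j \<and> j \<le> c \<and> c \<le> i"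
    using assms(1) unfolding fill_inv_def by blast+
  then have "{1..Suc i} \<subseteq> Domain C" "\<forall>c j. (c, j) \<in> C - V \<longrightarrow> 1 \<le> j \<and> j \<le> c \<and> c \<le> Suc i"
    using DomainI[OF assms(2)] le_SucI by (simp add: atLeastAtMostSuc_conv, blast)
  then show ?thesis
    using assms(1) unfolding fill_inv_def by blast
qed

lemma fill_inv_insert:
  assumes "fill_inv i C" "Suc i \<notin> Domain C" "1 \<le> j" "j \<le> Suc i" "j \<notin> Range C"
  shows "fill_inv (Suc i) (insert (Suc i, j) C)"
proof -
  let ?C' = "insert (Suc i, j) C"
  have inv: "V \<subseteq> C" "finite C" "inj_on fst C" "inj_on snd C" "{1..i} \<subseteq> Domain C"
    "\<forall>c j. (c, j) \<in> C - V \<longrightarrow> 1 \<le> j \<and> j \<le> c \<and> c \<le> i"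
    using assms(1) unfolding fill_inv_def by blast+
  have "(Suc i, j) \<notin> V"
    using assms(2) inv(1) by blast
  have "inj_on fst ?C'" "inj_on snd ?C'"
    using inv(3,4) assms(2,5) unfolding Domain_fst Range_snd by (auto simp: inj_on_insert)
  moreover have "{1..Suc i} \<subseteq> Domain ?C'"
    using inv(5) by (auto simp: atLeastAtMostSuc_conv)
  moreover have "\<forall>c j'. (c, j') \<in> ?C' - V \<longrightarrow> 1 \<le> j' \<and> j' \<le> c \<and> c \<le> Suc i"
    using inv(6) assms(3,4) by (auto simp: le_SucI)
  ultimately show ?thesis
    using inv(1,2) unfolding fill_inv_def by blast
qed

lemma least_free_row:
  assumes "fill_inv i C" "Suc i \<le> n"
  defines "L \<equiv> LEAST j. 1 \<le> j \<and> j \<le> n \<and> (\<forall>c. (c, j) \<notin> C)"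
  shows "1 \<le> L" "L \<le> Suc i" "L \<notin> Range C"
proof -
  let ?P = "\<lambda>j. 1 \<le> j \<and> j \<le> n \<and> (\<forall>c. (c, j) \<notin> C)"
  obtain j0 where j0: "1 \<le> j0" "j0 \<le> Suc i" "j0 \<notin> Range C"
    using fill_free_row[OF assms(1)] by blast
  then have "?P j0"
    using assms(2) by (auto simp: Range_iff)
  from LeastI[of ?P, OF this] Least_le[of ?P, OF this] j0
  show "1 \<le> L" "L \<le> Suc i" "L \<notin> Range C"
    unfolding L_def by (auto simp: Range_iff)
qed

lemma fill_inv_bjs_fill: "i \<le> n \<Longrightarrow> fill_inv i (bjs_fill n V i)"
proof (induction i)
  case 0
  show ?case using fill_inv_0 by simp
next
  case (Suc i)
  then have inv: "fill_inv i (bjs_fill n V i)"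
    by simp
  show ?case
  proof (cases "Suc i \<in> Domain (bjs_fill n V i)")
    case True
    then show ?thesis
      using fill_inv_keep[OF inv] by (auto simp: Let_def)
  next
    case False
    then show ?thesis
      using fill_inv_insert[OF inv False least_free_row[OF inv Suc.prems]]
      by (auto simp: Let_def)
  qed
qed

lemma no_straddling_valley_iff:
  assumes "\<nexists>r. (Suc m, r) \<in> V"
  shows "(\<nexists>c. (c, Suc m) \<in> V) \<and> (\<forall>c r. (c, r) \<in> V \<longrightarrow> c \<le> m \<longrightarrow> r \<le> m)
    \<longleftrightarrow> \<not> (\<exists>c r. (c, r) \<in> V \<and> c \<le> Suc m \<and> Suc m \<le> r)"
proof
  assume "(\<nexists>c. (c, Suc m) \<in> V) \<and> (\<forall>c r. (c, r) \<in> V \<longrightarrow> c \<le> m \<longrightarrow> r \<le> m)"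
  then have low: "\<forall>c r. (c, r) \<in> V \<longrightarrow> c \<le> m \<longrightarrow> r \<le> m"
    by blast
  show "\<not> (\<exists>c r. (c, r) \<in> V \<and> c \<le> Suc m \<and> Suc m \<le> r)"
  proof
    assume "\<exists>c r. (c, r) \<in> V \<and> c \<le> Suc m \<and> Suc m \<le> r"
    then obtain c r where cr: "(c, r) \<in> V" "c \<le> Suc m" "Suc m \<le> r"
      by blast
    then have "c \<noteq> Suc m"
      using assms by blast
    then have "r \<le> m"
      using low cr by simp
    then show False
      using cr(3) by simp
  qed
next
  assume none: "\<not> (\<exists>c r. (c, r) \<in> V \<and> c \<le> Suc m \<and> Suc m \<le> r)"
  have "(c, Suc m) \<notin> V" for c
  proof
    assume "(c, Suc m) \<in> V"
    moreover from this have "c \<le> Suc m"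
      using cell_bounds by (simp add: less_imp_le)
    ultimately show False
      using none le_refl by blast
  qed
  moreover have "r \<le> m" if "(c, r) \<in> V" "c \<le> m" for c r
    using none that by (meson le_SucI not_less_eq_eq)
  ultimately show "(\<nexists>c. (c, Suc m) \<in> V) \<and> (\<forall>c r. (c, r) \<in> V \<longrightarrow> c \<le> m \<longrightarrow> r \<le> m)"
    by blast
qed

lemma least_free_row_eq_iff:
  assumes "fill_inv m C" "Suc m \<le> n" "Suc m \<notin> Domain C"
  shows "(LEAST j. 1 \<le> j \<and> j \<le> n \<and> (\<forall>c. (c, j) \<notin> C)) = Suc m
    \<longleftrightarrow> \<not> (\<exists>c r. (c, r) \<in> V \<and> c \<le> Suc m \<and> Suc m \<le> r)"
proof -
  let ?P = "\<lambda>j. 1 \<le> j \<and> j \<le> n \<and> (\<forall>c. (c, j) \<notin> C)"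
  have "V \<subseteq> C"
    using assms(1) unfolding fill_inv_def by blast
  have "?P (LEAST j. ?P j)"
    using least_free_row[OF assms(1,2)] assms(2) by (auto simp: Range_iff)
  then have "(LEAST j. ?P j) = Suc m \<longleftrightarrow> ?P (Suc m) \<and> (\<forall>j<Suc m. \<not> ?P j)"
    by (rule Least_eq_iff)
  also have "?P (Suc m) \<longleftrightarrow> (\<nexists>c. (c, Suc m) \<in> V)"
  proof -
    have "(c, Suc m) \<notin> C" if "(c, Suc m) \<notin> V" for c
      using fill_inv_cell(4)[OF assms(1), of c "Suc m"] that by auto
    then show ?thesis
      using \<open>V \<subseteq> C\<close> assms(2) by auto
  qed
  also have "(\<forall>j<Suc m. \<not> ?P j) \<longleftrightarrow> {1..m} \<subseteq> Range C"
    unfolding subset_iff Range_iff atLeastAtMost_iff using assms(2) by auto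
  also have "\<dots> \<longleftrightarrow> (\<forall>c r. (c, r) \<in> V \<longrightarrow> c \<le> m \<longrightarrow> r \<le> m)"
    by (rule fill_rows_occupied_iff[OF assms(1)])
  also have "(\<nexists>c. (c, Suc m) \<in> V) \<and> (\<forall>c r. (c, r) \<in> V \<longrightarrow> c \<le> m \<longrightarrow> r \<le> m)
      \<longleftrightarrow> \<not> (\<exists>c r. (c, r) \<in> V \<and> c \<le> Suc m \<and> Suc m \<le> r)"
  proof (rule no_straddling_valley_iff)
    show "\<nexists>r. (Suc m, r) \<in> V"
      using assms(3) \<open>V \<subseteq> C\<close> by (blast intro: DomainI)
  qed
  finally show ?thesis .
qed

lemma bjs_fill_diag_iff:
  assumes "1 \<le> k" "k \<le> n"
  shows "(k, k) \<in> bjs_fill n V k \<longleftrightarrow> \<not> (\<exists>c r. (c, r) \<in> V \<and> c \<le> k \<and> k \<le> r)"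
proof -
  obtain m where k: "k = Suc m"
    using assms by (cases k) auto
  let ?C = "bjs_fill n V m"
  have inv: "fill_inv m ?C"
    using fill_inv_bjs_fill assms k by simp
  have "(k, k) \<notin> ?C"
  proof
    assume "(k, k) \<in> ?C"
    from fill_inv_cell(3)[OF inv this] k show False
      by simp
  qed
  show ?thesis
  proof (cases "k \<in> Domain ?C")
    case True
    then obtain j where "(k, j) \<in> ?C"
      by auto
    then have "(k, j) \<in> V"
      using fill_inv_cell(4)[OF inv] k by fastforce
    then have "\<exists>c r. (c, r) \<in> V \<and> c \<le> k \<and> k \<le> r"
      using cell_bounds[of k j] by (meson le_refl less_imp_le)
    moreover have "bjs_fill n V k = ?C"
      using True k by (auto simp: Let_def)
    ultimately show ?thesis
      using \<open>(k, k) \<notin> ?C\<close> by simp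
  next
    case False
    let ?L = "LEAST j. 1 \<le> j \<and> j \<le> n \<and> (\<forall>c. (c, j) \<notin> ?C)"
    have "bjs_fill n V k = insert (k, ?L) ?C"
      using False k by (auto simp: Let_def)
    then have "(k, k) \<in> bjs_fill n V k \<longleftrightarrow> ?L = k"
      using \<open>(k, k) \<notin> ?C\<close> by auto
    then show ?thesis
      using least_free_row_eq_iff[OF inv] False assms k by simp
  qed
qed

lemma bjs_fill_fixed_iff:
  assumes "1 \<le> k" "k \<le> n"
  shows "(THE j. (k, j) \<in> bjs_fill n V n) = k \<longleftrightarrow> \<not> (\<exists>c r. (c, r) \<in> V \<and> c \<le> k \<and> k \<le> r)"
proof -
  have inv: "fill_inv n (bjs_fill n V n)"
    by (rule fill_inv_bjs_fill) simp
  then have "k \<in> Domain (bjs_fill n V n)" "inj_on fst (bjs_fill n V n)"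
    using assms unfolding fill_inv_def by auto
  then obtain j where j: "(k, j) \<in> bjs_fill n V n"
    by blast
  have unique: "j' = j" if "(k, j') \<in> bjs_fill n V n" for j'
    using inj_onD[OF \<open>inj_on fst (bjs_fill n V n)\<close> _ that j] by simp
  then have "(THE j. (k, j) \<in> bjs_fill n V n) = j"
    using j by (rule the_equality[rotated])
  then have "(THE j. (k, j) \<in> bjs_fill n V n) = k \<longleftrightarrow> (k, k) \<in> bjs_fill n V n"
    using j unique by metis
  also have "\<dots> \<longleftrightarrow> (k, k) \<in> bjs_fill n V k"
    using bjs_fill_column_stable[OF assms(2)] bjs_fill_mono[OF assms(2)] by blast
  finally show ?thesis
    using bjs_fill_diag_iff[OF assms] by simp
qed

end

locale dyck =
  fixes n :: nat and w :: "bool list"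
  assumes dyck: "dyck_path n w"
begin

lemma length_w: "length w = 2 * n"
  using dyck unfolding dyck_path_def by simp

lemma nN_length: "nN w (length w) = n"
  using dyck unfolding dyck_path_def by blast

lemma nE_length: "nE w (length w) = n"
  using nN_add_nE[of "length w" w] nN_length length_w by simp

lemma nE_le_nN: "p \<le> length w \<Longrightarrow> nE w p \<le> nN w p"
  using dyck unfolding dyck_path_def by simp

lemma nN_le: "nN w p \<le> n"
proof -
  have "nN w p \<le> nN w (max p (length w))"
    by (rule nN_mono) simp
  also have "\<dots> = n"
    using nN_length unfolding nN_def by simp
  finally show ?thesis .
qed

lemma length_north_positions: "length (north_positions w) = n"
  using nN_eq_length_filter_upt[of "length w" w] nN_length
  unfolding north_positions_def by simp

lemma length_east_positions: "length (east_positions w) = n"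
  using nE_eq_length_filter_upt[of "length w" w] nE_length
  unfolding east_positions_def by simp

lemma north_position:
  assumes "i < n"
  shows "north_positions w ! i < length w" "w ! (north_positions w ! i)"
    and "nN w (north_positions w ! i) = i"
  using length_filter_upt_nth[of i "(!) w" "length w"] assms length_north_positions
    nN_eq_length_filter_upt[of _ w]
  unfolding north_positions_def by (metis less_imp_le_nat)+

lemma east_position:
  assumes "i < n"
  shows "east_positions w ! i < length w" "\<not> w ! (east_positions w ! i)"
    and "nE w (east_positions w ! i) = i"
  using length_filter_upt_nth[of i "\<lambda>p. \<not> w ! p" "length w"] assms length_east_positions
    nE_eq_length_filter_upt[of _ w]
  unfolding east_positions_def by (metis less_imp_le_nat)+

lemma north_position_nN:
  assumes "q < length w" "w ! q"
  shows "north_positions w ! nN w q = q"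
  using filter_upt_nth_length_filter(1)[of q "length w" "(!) w"] assms nN_eq_length_filter_upt[of q w]
  unfolding north_positions_def by simp

lemma north_positions_less:
  assumes "i < i'" "i' < n"
  shows "north_positions w ! i < north_positions w ! i'"
proof -
  have "sorted_wrt (<) (north_positions w)"
    unfolding north_positions_def by (simp add: sorted_wrt_filter)
  then show ?thesis
    using assms length_north_positions by (simp add: sorted_wrt_iff_nth_less)
qed

lemma xk_less:
  assumes "1 \<le> r" "r \<le> n"
  shows "xk w r < r"
proof -
  let ?q = "north_positions w ! (r - 1)"
  have "?q < length w" "nN w ?q = r - 1"
    using north_position assms by auto
  then show ?thesis
    using nE_le_nN[of ?q] assms unfolding xk_def by simp
qed

text \<open>By truncated subtraction xk w 0 = xk w 1, which makes row_area_eq hold at r = 0 too.\<close>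
lemma xk_0: "xk w 0 = 0"
proof (cases "n = 0")
  case True
  then show ?thesis
    using length_w unfolding xk_def nE_def by simp
next
  case False
  then show ?thesis
    using xk_less[of 1] unfolding xk_def by simp
qed

lemma xk_mono:
  assumes "r \<le> r'" "r' \<le> n"
  shows "xk w r \<le> xk w r'"
  using assms north_positions_less[of "r - 1" "r' - 1"] nE_mono[of _ _ w]
  unfolding xk_def by (cases "r - 1 = r' - 1") (auto simp: less_imp_le)

lemma row_area_eq: "row_area w r = int r - 1 - int (xk w r)"
  unfolding row_area_def using xk_0 by simp

lemma valleys_eq: "valleys w = {(xk w r, r) | r. r \<le> n \<and> xk w (r - 1) < xk w r}"
proof (intro equalityI subsetI)
  fix v assume "v \<in> valleys w"
  then obtain p where v: "v = (nE w p + 1, nN w (Suc p) + 1)"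
    and p: "Suc p < length w" "\<not> w ! p" "w ! Suc p"
    unfolding valleys_def by blast
  define i where "i = nN w (Suc p)"
  have pos: "north_positions w ! i = Suc p"
    using north_position_nN p i_def by simp
  have "i < n"
    using nN_Suc[of "Suc p" w] nN_le[of "Suc (Suc p)"] p i_def by simp
  have x: "xk w (Suc i) = nE w p + 1"
    unfolding xk_def using pos nE_Suc[of p w] p by simp
  then have "i \<noteq> 0"
    using xk_less[of 1] \<open>i < n\<close> by (cases i) auto
  then have "north_positions w ! (i - 1) \<le> p"
    using north_positions_less[of "i - 1" i] pos \<open>i < n\<close> by simp
  then have "xk w i \<le> nE w p"
    unfolding xk_def using nE_mono by simp
  then show "v \<in> {(xk w r, r) | r. r \<le> n \<and> xk w (r - 1) < xk w r}"
    using v x \<open>i < n\<close> i_def by (intro CollectI exI[of _ "Suc i"]) auto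
next
  fix v assume "v \<in> {(xk w r, r) | r. r \<le> n \<and> xk w (r - 1) < xk w r}"
  then obtain r where v: "v = (xk w r, r)" and r: "r \<le> n" "xk w (r - 1) < xk w r"
    by blast
  have "2 \<le> r"
  proof (rule ccontr)
    assume "\<not> 2 \<le> r"
    then have "r = 0 \<or> r = 1"
      by auto
    then show False
      using r xk_0 xk_less[of 1] by auto
  qed
  define q where "q = north_positions w ! (r - 1)"
  have q: "q < length w" "w ! q" "nN w q = r - 1"
    using north_position[of "r - 1"] r \<open>2 \<le> r\<close> q_def by auto
  have "north_positions w ! (r - 2) < q"
    using north_positions_less[of "r - 2" "r - 1"] r \<open>2 \<le> r\<close> q_def by simp
  then obtain p where p: "q = Suc p"
    using less_imp_Suc_add by blast
  have "\<not> w ! p"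
  proof
    assume "w ! p"
    then have "north_positions w ! nN w p = p"
      using north_position_nN p q by simp
    have "nN w p = r - 2" "nE w q = nE w p"
      using nN_Suc[of p w] nE_Suc[of p w] \<open>w ! p\<close> p q by auto
    have "xk w (r - 1) = nE w (north_positions w ! (r - 2))"
      unfolding xk_def by (simp add: numeral_2_eq_2)
    also have "\<dots> = xk w r"
      using calculation \<open>north_positions w ! nN w p = p\<close> \<open>nN w p = r - 2\<close>
        \<open>nE w q = nE w p\<close> unfolding xk_def q_def by simp
    finally have "xk w (r - 1) = xk w r" .
    then show False
      using r by simp
  qed
  then have "v = (nE w p + 1, nN w (Suc p) + 1)"
    using v q p nE_Suc[of p w] \<open>2 \<le> r\<close> unfolding xk_def q_def by simp
  then show "v \<in> valleys w"
    unfolding valleys_def using q p \<open>\<not> w ! p\<close> by blast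
qed

lemma yk_ge_iff:
  assumes "k < n" "1 \<le> r" "r \<le> n"
  shows "r \<le> yk w (Suc k) \<longleftrightarrow> xk w r \<le> k"
proof -
  define e where "e = east_positions w ! k"
  define q where "q = north_positions w ! (r - 1)"
  have e: "e < length w" "\<not> w ! e" "nE w e = k"
    using east_position assms e_def by auto
  have q: "q < length w" "w ! q" "nN w q = r - 1"
    using north_position assms q_def by auto
  have "yk w (Suc k) = nN w e" "xk w r = nE w q"
    unfolding yk_def e_def xk_def q_def by simp_all
  moreover have "q < e \<or> e < q"
    using e q by (metis linorder_neqE_nat)
  moreover have "q < e \<Longrightarrow> nN w (Suc q) \<le> nN w e \<and> nE w q \<le> nE w e"
    and "e < q \<Longrightarrow> nN w e \<le> nN w q \<and> nE w (Suc e) \<le> nE w q"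
    using nN_mono nE_mono by auto
  moreover have "nN w (Suc q) = r" "nE w (Suc e) = Suc k"
    using nN_Suc[of q w] nE_Suc[of e w] q e assms by auto
  ultimately show ?thesis
    using e q assms by auto
qed

text \<open>The row k + 1 + c_{k+1} occurring in the definition of fixset.\<close>
definition fix_row :: "nat \<Rightarrow> nat" where
  "fix_row k = (if k = n then n else yk w (Suc k))"

lemma col_area_Suc_eq: "k \<le> n \<Longrightarrow> col_area n w (Suc k) = int (fix_row k) - int k - 1"
  unfolding col_area_def fix_row_def by simp

lemma fix_row_le: "fix_row k \<le> n"
  using nN_le unfolding fix_row_def yk_def by simp

lemma le_fix_row_iff:
  assumes "k \<le> n" "1 \<le> r" "r \<le> n"
  shows "r \<le> fix_row k \<longleftrightarrow> xk w r \<le> k"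
  using yk_ge_iff[of k r] xk_less[of r] assms unfolding fix_row_def by auto

lemma mem_fixset_iff:
  assumes "1 \<le> k" "k \<le> n"
  shows "k \<in> fixset n w \<longleftrightarrow> \<not> (\<exists>c r. (c, r) \<in> valleys w \<and> c \<le> k \<and> k \<le> r)"
proof -
  let ?Y = "fix_row k"
  have "k \<le> ?Y"
    using le_fix_row_iff[of k k] xk_less[of k] assms by simp
  have "k \<in> fixset n w \<longleftrightarrow> row_area w (nat (int k + 1 + col_area n w (k + 1)))
      = row_area w (k - 1) + col_area n w (k + 1) + 2"
    unfolding fixset_def using assms by simp
  also have "\<dots> \<longleftrightarrow> xk w (k - 1) = xk w ?Y"
    using assms col_area_Suc_eq[of k] \<open>k \<le> ?Y\<close> by (auto simp: row_area_eq of_nat_diff)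
  also have "\<dots> \<longleftrightarrow> \<not> (\<exists>r. k - 1 < r \<and> r \<le> ?Y \<and> xk w (r - 1) < xk w r)"
  proof (rule mono_on_eq_iff_no_ascent)
    show "mono_on {k - 1..?Y} (xk w)"
      using xk_mono fix_row_le[of k] by (intro mono_onI) (meson atLeastAtMost_iff order_trans)
  qed (use \<open>k \<le> ?Y\<close> in simp)
  also have "\<dots> \<longleftrightarrow> \<not> (\<exists>r. r \<le> n \<and> xk w (r - 1) < xk w r \<and> xk w r \<le> k \<and> k \<le> r)"
  proof -
    have "k - 1 < r \<and> r \<le> ?Y \<longleftrightarrow> r \<le> n \<and> xk w r \<le> k \<and> k \<le> r" for r
      using le_fix_row_iff[of k r] fix_row_le[of k] assms by auto
    then show ?thesis
      by auto
  qed
  finally show ?thesis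
    by (auto simp: valleys_eq)
qed

lemma upper_partial_perm_valleys: "upper_partial_perm n (valleys w)"
proof
  fix c r assume "(c, r) \<in> valleys w"
  then have "c = xk w r" "r \<le> n" "xk w (r - 1) < xk w r"
    unfolding valleys_eq by blast+
  then show "1 \<le> c \<and> c < r \<and> r \<le> n"
    using xk_less[of r] by (cases r) auto
next
  show "inj_on fst (valleys w)"
  proof (rule inj_onI)
    fix u v assume "u \<in> valleys w" "v \<in> valleys w" and same_col: "fst u = fst v"
    then obtain r r' where u: "u = (xk w r, r)" "r \<le> n" "xk w (r - 1) < xk w r"
      and v: "v = (xk w r', r')" "r' \<le> n" "xk w (r' - 1) < xk w r'"
      unfolding valleys_eq by blast
    have "xk w r < xk w r'" if "r < r'" "r' \<le> n" "xk w (r' - 1) < xk w r'" for r r'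
    proof -
      have "xk w r \<le> xk w (r' - 1)"
        using that by (intro xk_mono) simp_all
      then show ?thesis
        using that(3) by simp
    qed
    then have "r = r'"
      using u v same_col by (metis fst_conv linorder_neqE_nat less_irrefl)
    then show "u = v"
      using u v by simp
  qed
next
  show "inj_on snd (valleys w)"
    unfolding valleys_eq by (rule inj_onI) auto
qed

end

theorem mainTheorem4:
  fixes n k :: nat and w :: "bool list"
  assumes "dyck_path n w" and "k \<in> {1..n}"
  shows "k \<in> fixset n w \<longleftrightarrow> bjs_perm n w k = k"
proof -
  interpret dyck n w
    by (rule dyck.intro) (fact assms(1))
  interpret upper_partial_perm n "valleys w"
    by (rule upper_partial_perm_valleys)
  have "1 \<le> k" "k \<le> n"
    using assms(2) by simp_all
  show ?thesis
    unfolding bjs_perm_def bjs_crosses_eq_bjs_fill mem_fixset_iff[OF \<open>1 \<le> k\<close> \<open>k \<le> n\<close>]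
      bjs_fill_fixed_iff[OF \<open>1 \<le> k\<close> \<open>k \<le> n\<close>] by (rule refl)
qed

end
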